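(* Consider the setting described in the context (decentralized affine nonlinear system, loop $j$, controller $K_{i,j}$ with $A_{jj}-B_{jj}K_{i,j}$ Hurwitz, sample times $t_0<\dots<t_l$, data trajectories, and a block-diagonal state transformation $S=\mathrm{diag}(S_1,\dots,S_N)$ with $S_j\in\mathrm{GL}(n_j)$). Let $\mathbf{A}_{i,j},\mathbf{b}_{i,j}$ be the dEIRL regression matrix and vector and $\tilde{\mathbf{A}}_{i,j},\tilde{\mathbf{b}}_{i,j}$ the MEE (modulated) regression matrix and vector. Then $P_{i,j}\in\mathbb{S}^{n_j}$, $P_{i,j}>0$, satisfies the dEIRL regression $\mathbf{A}_{i,j}\operatorname{svec}(P_{i,j})=\mathbf{b}_{i,j}$ if and only if $\tilde P_{i,j}=S_j^{-T}P_{i,j}S_j^{-1}$ satisfies the MEE regression $\tilde{\mathbf{A}}_{i,j}\operatorname{svec}(\tilde P_{i,j})=\tilde{\mathbf{b}}_{i,j}$. Furthermore, $$\tilde{\mathbf{A}}_{i,j}=\mathbf{A}_{i,j}(S_j\,\underline{\otimes}\, S_j)^T,\qquad \tilde{\mathbf{b}}_{i,j}=\mathbf{b}_{i,j}.$$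
   Context: Symmetric Kronecker algebra: for $k\in\mathbb{N}$ let $\underline{k}=k(k+1)/2$, $\mathbb{S}^k$ the real symmetric $k\times k$ matrices, $\operatorname{vec}$ column-stacking, $\otimes$ the Kronecker product, $e_1,\dots,e_k$ the standard basis. Enumerate pairs $(r,c)$, $1\le r\le c\le k$, in the order $(1,1),\dots,(1,k),(2,2),\dots,(2,k),\dots,(k,k)$ as $(r(\ell),c(\ell))$; set $E_\ell=e_{r(\ell)}e_{r(\ell)}^T$ if $r(\ell)=c(\ell)$, $E_\ell=\frac{\sqrt2}{2}(e_{r(\ell)}e_{c(\ell)}^T+e_{c(\ell)}e_{r(\ell)}^T)$ otherwise; $W_k\in\mathbb{R}^{\underline{k}\times k^2}$ has $\ell$-th row $\operatorname{vec}(E_\ell)^T$. For $A,B\in\mathbb{R}^{p\times q}$, $A\,\underline{\otimes}\, B = W_p(A\otimes B)W_q^T$ (for row vectors $a^T,b^T$, $a,b\in\mathbb{R}^q$: $a^T\,\underline{\otimes}\, b^T=(a\otimes b)^TW_q^T$). $\operatorname{svec}(P)=W_k\operatorname{vec}(P)$ for $P\in\mathbb{S}^k$. For $t_0<\dots<t_l$ and $x,y:[t_0,t_l]\to\mathbb{R}^k$: $\delta_{x,y}\in\mathbb{R}^{l\times\underline{k}}$ has $k'$-th row $(x(t_{k'})+y(t_{k'-1}))^T\,\underline{\otimes}\,(x(t_{k'})-y(t_{k'-1}))^T$, and for square-integrable $x,y$, $I_{x,y}\in\mathbb{R}^{l\times\underline{k}}$ has $k'$-th row $\int_{t_{k'-1}}^{t_{k'}}x^T\,\underline{\otimes}\,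 y^T\,d\tau$. System: $\dot x=f(x)+g(x)u$, $x\in\mathbb{R}^n$, $u\in\mathbb{R}^m$, with $f(0)=0$, $f,g$ Lipschitz on a compact set containing the origin in its interior, and state partitioned into $N$ loops $x=(x_1,\dots,x_N)$, $x_j\in\mathbb{R}^{n_j}$, $u=(u_1,\dots,u_N)$, $u_j\in\mathbb{R}^{m_j}$, so that $\dot x_j=f_j(x)+g_j(x)u$ with $g_j(x)\in\mathbb{R}^{n_j\times m}$. $(A,B)$ is the linearization at $0$, with diagonal blocks $A_{jj}\in\mathbb{R}^{n_j\times n_j}$, $B_{jj}\in\mathbb{R}^{n_j\times m_j}$. Cost matrices $Q_j\in\mathbb{S}^{n_j}$, $Q_j\ge0$, $R_j\in\mathbb{S}^{m_j}$, $R_j>0$. Fix loop $j$ and $K_{i,j}\in\mathbb{R}^{m_j\times n_j}$ with $A_{jj}-B_{jj}K_{i,j}$ Hurwitz, and put $Q_{i,j}=Q_j+K_{i,j}^TR_jK_{i,j}$. Let $x(\cdot),u(\cdot)$ be a (square-integrable) state-input trajectory on $[t_0,t_l]$ and $w_j=f_j(x)-A_{jj}x_j$. The dEIRL regression is $\mathbf{A}_{i,j}=\delta_{x_j,x_j}-2\big[I_{x_j,x_j}(I_{n_j}\,\underline{\otimes}\, B_{jj}K_{i,j})^T+I_{x_j,g_j(x)u}+I_{x_j,w_j}\big]\in\mathbb{R}^{l\times\underline{n}_j}$, $\mathbf{b}_{i,j}=-I_{x_j,x_j}\operatorname{svec}(Q_{i,j})$. Modulation: $S=\mathrm{diag}(S_1,\dots,S_N)$,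 $S_j\in\mathrm{GL}(n_j)$, $\tilde x=Sx$, $\tilde x_j=S_jx_j$; $\tilde f_j=S_j\circ f_j\circ S^{-1}$, $\tilde g_j=S_j\circ g_j\circ S^{-1}$, $\tilde A_{jj}=S_jA_{jj}S_j^{-1}$, $\tilde B_{jj}=S_jB_{jj}$, $\tilde Q_j=S_j^{-T}Q_jS_j^{-1}$, $\tilde K_{i,j}=K_{i,j}S_j^{-1}$, $\tilde Q_{i,j}=\tilde Q_j+\tilde K_{i,j}^TR_j\tilde K_{i,j}$, $\tilde w_j=\tilde f_j(\tilde x)-\tilde A_{jj}\tilde x_j$. The MEE regression $(\tilde{\mathbf{A}}_{i,j},\tilde{\mathbf{b}}_{i,j})$ is defined by the same formulas as $(\mathbf{A}_{i,j},\mathbf{b}_{i,j})$ with every quantity replaced by its tilded counterpart (data $\tilde x_j$, $\tilde g_j(\tilde x)u$, $\tilde w_j$, $\tilde B_{jj}\tilde K_{i,j}$, $\tilde Q_{i,j}$). *)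

theory Defs
  imports "HOL-Analysis.Analysis" "Jordan_Normal_Form.Matrix" "Jordan_Normal_Form.Char_Poly"
begin

(* All indices are 0-based.  Vectors are JNF 'real vec', matrices JNF 'real mat'. *)

definition tri :: "nat \<Rightarrow> nat" where
  "tri k = k * (k + 1) div 2"

definition svec_pairs :: "nat \<Rightarrow> (nat \<times> nat) list" where
  "svec_pairs k = concat (map (\<lambda>r. map (\<lambda>c. (r, c)) [r..<k]) [0..<k])"

definition Ebas :: "nat \<Rightarrow> nat \<Rightarrow> real mat" where
  "Ebas k l = (let (r, c) = svec_pairs k ! l in
     mat k k (\<lambda>(a, b). if r = c then (if a = r \<and> b = r then 1 else 0)
                        else if (a = r \<and> b = c) \<or> (a = c \<and> b = r) then sqrt 2 / 2 else 0))"

definition vecm :: "real mat \<Rightarrow> real vec" where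
  "vecm A = vec (dim_row A * dim_col A) (\<lambda>i. A $$ (i mod dim_row A, i div dim_row A))"

definition Wmat :: "nat \<Rightarrow> real mat" where
  "Wmat k = mat (tri k) (k * k) (\<lambda>(l, i). vecm (Ebas k l) $ i)"

definition kron :: "real mat \<Rightarrow> real mat \<Rightarrow> real mat" where
  "kron A B = mat (dim_row A * dim_row B) (dim_col A * dim_col B)
     (\<lambda>(i, j). A $$ (i div dim_row B, j div dim_col B) * B $$ (i mod dim_row B, j mod dim_col B))"

definition kron_vec :: "real vec \<Rightarrow> real vec \<Rightarrow> real vec" where
  "kron_vec a b = vec (dim_vec a * dim_vec b) (\<lambda>i. a $ (i div dim_vec b) * b $ (i mod dim_vec b))"

definition skron :: "real mat \<Rightarrow> real mat \<Rightarrow> real mat" where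
  "skron A B = Wmat (dim_row A) * kron A B * transpose_mat (Wmat (dim_col A))"

(* a^T skron b^T = (a \<otimes> b)^T W_q^T, represented as the (column) vector W_q (a \<otimes> b) *)
definition skron_row :: "real vec \<Rightarrow> real vec \<Rightarrow> real vec" where
  "skron_row a b = Wmat (dim_vec a) *\<^sub>v kron_vec a b"

definition svec :: "real mat \<Rightarrow> real vec" where
  "svec P = Wmat (dim_row P) *\<^sub>v vecm P"

(* delta_{x,y} \<in> R^{l \<times> tri k}; row r (0-based) corresponds to k' = r+1 *)
definition delta_mat :: "nat \<Rightarrow> (nat \<Rightarrow> real) \<Rightarrow> nat \<Rightarrow> (real \<Rightarrow> real vec) \<Rightarrow> (real \<Rightarrow> real vec) \<Rightarrow> real mat" where
  "delta_mat k t l x y = mat l (tri k)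
     (\<lambda>(r, c). skron_row (x (t (Suc r)) + y (t r)) (x (t (Suc r)) - y (t r)) $ c)"

definition Int_mat :: "nat \<Rightarrow> (nat \<Rightarrow> real) \<Rightarrow> nat \<Rightarrow> (real \<Rightarrow> real vec) \<Rightarrow> (real \<Rightarrow> real vec) \<Rightarrow> real mat" where
  "Int_mat k t l x y = mat l (tri k)
     (\<lambda>(r, c). integral {t r .. t (Suc r)} (\<lambda>\<tau>. skron_row (x \<tau>) (y \<tau>) $ c))"

definition sq_integrable_on :: "nat \<Rightarrow> (real \<Rightarrow> real vec) \<Rightarrow> real \<Rightarrow> real \<Rightarrow> bool" where
  "sq_integrable_on d x a b \<longleftrightarrow>
     (\<forall>i<d. (\<lambda>\<tau>. x \<tau> $ i) measurable_on {a..b} \<and> (\<lambda>\<tau>. (x \<tau> $ i)^2) integrable_on {a..b})"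

definition vnorm :: "real vec \<Rightarrow> real" where
  "vnorm v = sqrt (v \<bullet> v)"

definition hurwitz :: "real mat \<Rightarrow> bool" where
  "hurwitz M \<longleftrightarrow> (\<forall>z. eigenvalue (map_mat complex_of_real M) z \<longrightarrow> Re z < 0)"

definition sym_mat :: "nat \<Rightarrow> real mat \<Rightarrow> bool" where
  "sym_mat k P \<longleftrightarrow> P \<in> carrier_mat k k \<and> transpose_mat P = P"

definition psd_mat :: "nat \<Rightarrow> real mat \<Rightarrow> bool" where
  "psd_mat k P \<longleftrightarrow> sym_mat k P \<and> (\<forall>v. dim_vec v = k \<longrightarrow> v \<bullet> (P *\<^sub>v v) \<ge> 0)"

definition pd_mat :: "nat \<Rightarrow> real mat \<Rightarrow> bool" where
  "pd_mat k P \<longleftrightarrow> sym_mat k P \<and> (\<forall>v. dim_vec v = k \<longrightarrow> v \<noteq> 0\<^sub>v k \<longrightarrow> v \<bullet> (P *\<^sub>v v) > 0)"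

definition minv :: "real mat \<Rightarrow> real mat" where
  "minv A = (SOME B. inverts_mat A B \<and> inverts_mat B A)"

(* loop partition: dims ds 0, ..., ds (N-1); offset of block j *)
definition offs :: "(nat \<Rightarrow> nat) \<Rightarrow> nat \<Rightarrow> nat" where
  "offs ds j = (\<Sum>i<j. ds i)"

definition blk_vec :: "(nat \<Rightarrow> nat) \<Rightarrow> nat \<Rightarrow> real vec \<Rightarrow> real vec" where
  "blk_vec ds j v = vec (ds j) (\<lambda>i. v $ (offs ds j + i))"

definition blk_rows :: "(nat \<Rightarrow> nat) \<Rightarrow> nat \<Rightarrow> real mat \<Rightarrow> real mat" where
  "blk_rows ds j M = mat (ds j) (dim_col M) (\<lambda>(a, b). M $$ (offs ds j + a, b))"

definition blk_diag_entry :: "(nat \<Rightarrow> nat) \<Rightarrow> (nat \<Rightarrow> nat) \<Rightarrow> nat \<Rightarrow> real mat \<Rightarrow> real mat" where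
  "blk_diag_entry rs cs j M = mat (rs j) (cs j) (\<lambda>(a, b). M $$ (offs rs j + a, offs cs j + b))"

definition block_diag :: "nat \<Rightarrow> (nat \<Rightarrow> nat) \<Rightarrow> (nat \<Rightarrow> real mat) \<Rightarrow> real mat" where
  "block_diag N ds Ss = (let n = offs ds N in
     mat n n (\<lambda>(a, b). if (\<exists>j<N. offs ds j \<le> a \<and> a < offs ds (Suc j) \<and> offs ds j \<le> b \<and> b < offs ds (Suc j))
        then (let j = (THE j. j < N \<and> offs ds j \<le> a \<and> a < offs ds (Suc j)) in Ss j $$ (a - offs ds j, b - offs ds j))
        else 0))"

(* the dEIRL regression (A_{i,j}, b_{i,j}) for a loop with data
   xj (loop state), gu (= g_j(x)u), wj, BK (= B_jj K_{i,j}), Qi (= Q_{i,j}) *)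
definition reg_A :: "nat \<Rightarrow> (nat \<Rightarrow> real) \<Rightarrow> nat \<Rightarrow> (real \<Rightarrow> real vec) \<Rightarrow> (real \<Rightarrow> real vec)
     \<Rightarrow> (real \<Rightarrow> real vec) \<Rightarrow> real mat \<Rightarrow> real mat" where
  "reg_A k t l xj gu wj BK = delta_mat k t l xj xj -
     2 \<cdot>\<^sub>m (Int_mat k t l xj xj * transpose_mat (skron (1\<^sub>m k) BK) + Int_mat k t l xj gu + Int_mat k t l xj wj)"

definition reg_b :: "nat \<Rightarrow> (nat \<Rightarrow> real) \<Rightarrow> nat \<Rightarrow> (real \<Rightarrow> real vec) \<Rightarrow> real mat \<Rightarrow> real vec" where
  "reg_b k t l xj Qi = - (Int_mat k t l xj xj *\<^sub>v svec Qi)"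

end

theory Submission
  imports Defs
begin

text \<open>
  Each row of the data matrices \<open>\<delta>\<close> and \<open>I\<close> is a symmetric Kronecker product \<open>a \<otimes>\<^sub>s b\<close> of
  data vectors, or an integral of such products.  As \<open>(S a) \<otimes>\<^sub>s (S b) = (S \<otimes>\<^sub>s S)(a \<otimes>\<^sub>s b)\<close>,
  modulating the data by \<open>S\<^sub>j\<close> multiplies every data matrix on the right by \<open>(S\<^sub>j \<otimes>\<^sub>s S\<^sub>j)\<^sup>T\<close>.
  The feedback term \<open>S\<^sub>j B\<^sub>j\<^sub>j K S\<^sub>j\<^sup>-\<^sup>1\<close> commutes past this factor: by the product rule
  \<open>(A \<otimes>\<^sub>s B)(C \<otimes>\<^sub>s D) = (AC \<otimes>\<^sub>s BD + AD \<otimes>\<^sub>s BC)/2\<close>, both \<open>(I \<otimes>\<^sub>s B')(S \<otimes>\<^sub>s S)\<close> and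
  \<open>(S \<otimes>\<^sub>s S)(I \<otimes>\<^sub>s M)\<close> equal \<open>S \<otimes>\<^sub>s SM\<close> whenever \<open>B' S = S M\<close>.  Finally
  \<open>(A \<otimes>\<^sub>s A) svec Z = svec (A Z A\<^sup>T)\<close> gives \<open>(S \<otimes>\<^sub>s S)\<^sup>T svec (S\<^sup>-\<^sup>T P S\<^sup>-\<^sup>1) = svec P\<close>,
  which yields the equivalence and, applied to the cost \<open>Q\<^sub>i\<^sub>,\<^sub>j\<close>, the equality of the right-hand sides.
\<close>

lemma sum_lessThan_mult_nat: "(\<Sum>m<(q::nat) * t. f m) = (\<Sum>a<q. \<Sum>b<t. f (a * t + b))"
proof -
  have "sum f {a * t..<a * t + t} = (\<Sum>b<t. f (a * t + b))" for a
    using sum.shift_bounds_nat_ivl[of f 0 "a * t" t] by (simp add: atLeast0LessThan add.commute)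
  then show ?thesis using sum.nat_group[of f t q] by simp
qed

lemma div_mod_less_of_less_mult: "i < p * (s::nat) \<Longrightarrow> i div s < p \<and> i mod s < s"
  by (cases "s = 0") (simp_all add: less_mult_imp_div_less)

lemma mult_add_less_mult: "a < q \<Longrightarrow> b < t \<Longrightarrow> a * t + b < q * (t::nat)"
proof -
  assume "a < q" "b < t"
  then have "a * t + b < Suc a * t" by simp
  also have "\<dots> \<le> q * t" using \<open>a < q\<close> by (intro mult_le_mono1) simp
  finally show ?thesis .
qed

lemma index_mult_mat_sum:
  "A \<in> carrier_mat n m \<Longrightarrow> B \<in> carrier_mat m p \<Longrightarrow> i < n \<Longrightarrow> j < p \<Longrightarrow>
   (A * B) $$ (i, j) = (\<Sum>k<m. A $$ (i, k) * B $$ (k, j))"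
  by (simp add: scalar_prod_def atLeast0LessThan)

lemma index_mult_mat_vec_sum:
  "A \<in> carrier_mat n m \<Longrightarrow> dim_vec v = m \<Longrightarrow> i < n \<Longrightarrow> (A *\<^sub>v v) $ i = (\<Sum>k<m. A $$ (i, k) * v $ k)"
  by (simp add: scalar_prod_def atLeast0LessThan)

text \<open>Unlike \<open>assoc_mult_mat\<close>, the side conditions mention no dimension that is absent from the
  conclusion, so the simplifier can discharge them.\<close>
lemma assoc_mult_mat_dim:
  "dim_col A = dim_row B \<Longrightarrow> dim_col B = dim_row C \<Longrightarrow> A * B * C = A * (B * C)"
  by (rule assoc_mult_mat[OF carrier_matI carrier_matI carrier_matI]) auto

lemma assoc_mult_mat_vec_dim:
  "dim_col A = dim_row B \<Longrightarrow> dim_col B = dim_vec v \<Longrightarrow> (A * B) *\<^sub>v v = A *\<^sub>v (B *\<^sub>v v)"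
  by (rule assoc_mult_mat_vec[OF carrier_matI carrier_matI carrier_vecI]) auto

lemma transpose_mult_dim:
  "dim_col (A :: 'a :: comm_semiring_0 mat) = dim_row B \<Longrightarrow> transpose_mat (A * B) = transpose_mat B * transpose_mat A"
  by (rule transpose_mult[OF carrier_matI carrier_matI]) auto

lemma half_smult_add_self: "(1/2 :: real) \<cdot>\<^sub>m (X + X) = X"
  by (rule eq_matI) auto

lemma left_inverse_mult_mat_vec:
  fixes A B :: "'a :: semiring_1 mat"
  assumes A: "A \<in> carrier_mat m n" and B: "B \<in> carrier_mat n m" and BA: "B * A = 1\<^sub>m n"
    and v: "dim_vec v = n"
  shows "B *\<^sub>v (A *\<^sub>v v) = v"
proof -
  have "B *\<^sub>v (A *\<^sub>v v) = (B * A) *\<^sub>v v" using A B v by (simp add: assoc_mult_mat_vec_dim)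
  then show ?thesis using BA one_mult_mat_vec[OF carrier_vecI[OF v]] by simp
qed

lemma minus_similar_mult_mat_vec:
  fixes S Si A :: "'a :: comm_ring_1 mat"
  assumes S: "S \<in> carrier_mat n n" and Si: "Si \<in> carrier_mat n n" and A: "A \<in> carrier_mat n n"
    and inv: "Si * S = 1\<^sub>m n" and a: "dim_vec a = n" and v: "dim_vec v = n"
  shows "S *\<^sub>v a - (S * A * Si) *\<^sub>v (S *\<^sub>v v) = S *\<^sub>v (a - A *\<^sub>v v)"
proof -
  have "(S * A * Si) *\<^sub>v (S *\<^sub>v v) = S *\<^sub>v (A *\<^sub>v v)"
    using S Si A v left_inverse_mult_mat_vec[OF S Si inv v] by (simp add: assoc_mult_mat_vec_dim)
  moreover have "S *\<^sub>v (a - A *\<^sub>v v) = S *\<^sub>v a - S *\<^sub>v (A *\<^sub>v v)"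
    using A a by (intro mult_minus_distrib_mat_vec[OF S] carrier_vecI) simp_all
  ultimately show ?thesis by simp
qed

lemma minv_inverse:
  assumes A: "(A :: real mat) \<in> carrier_mat n n" and inv: "invertible_mat A"
  shows "minv A \<in> carrier_mat n n" "A * minv A = 1\<^sub>m n" "minv A * A = 1\<^sub>m n"
proof -
  have "inverts_mat A (minv A) \<and> inverts_mat (minv A) A"
    unfolding minv_def by (rule someI_ex) (use inv in \<open>simp add: invertible_mat_def\<close>)
  then have AB: "A * minv A = 1\<^sub>m n" and BA: "minv A * A = 1\<^sub>m (dim_row (minv A))"
    using A by (auto simp: inverts_mat_def)
  have "dim_row (minv A) = n" using arg_cong[OF BA, of dim_col] A by simp
  moreover have "dim_col (minv A) = n" using arg_cong[OF AB, of dim_col] by simp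
  ultimately show "minv A \<in> carrier_mat n n" by (rule carrier_matI)
  show "A * minv A = 1\<^sub>m n" by (rule AB)
  show "minv A * A = 1\<^sub>m n" using BA \<open>dim_row (minv A) = n\<close> by simp
qed

lemma congruence_add_feedback_cost:
  fixes T Q K R :: "'a :: comm_ring mat"
  assumes T: "T \<in> carrier_mat k k" and Q: "Q \<in> carrier_mat k k"
    and K: "K \<in> carrier_mat m k" and R: "R \<in> carrier_mat m m"
  shows "transpose_mat T * (Q + transpose_mat K * R * K) * T
    = transpose_mat T * Q * T + transpose_mat (K * T) * R * (K * T)"
proof -
  have KRK: "transpose_mat K * R * K \<in> carrier_mat k k" using K R by (intro mult_carrier_mat) auto
  have "transpose_mat T * (Q + transpose_mat K * R * K) * T
      = transpose_mat T * Q * T + transpose_mat T * (transpose_mat K * R * K) * T"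
    using T Q KRK by (simp add: mult_add_distrib_mat[of _ k k] add_mult_distrib_mat[of _ k k])
  also have "transpose_mat T * (transpose_mat K * R * K) * T = transpose_mat (K * T) * R * (K * T)"
    using T K R by (simp add: transpose_mult_dim assoc_mult_mat_dim)
  finally show ?thesis .
qed

lemma mult_transpose_mat_rows:
  fixes M T :: "'a :: comm_semiring_0 mat"
  assumes M: "M \<in> carrier_mat l m" and T: "T \<in> carrier_mat n m"
  shows "M * transpose_mat T = mat l n (\<lambda>(r, c). (T *\<^sub>v row M r) $ c)"
  using M T by (intro eq_matI) (auto simp: scalar_prod_def ac_simps intro!: sum.cong)

lemma dim_vecm [simp]: "dim_vec (vecm A) = dim_row A * dim_col A"
  by (simp add: vecm_def)

section \<open>Symmetric vectorization\<close>

lemma sum_diff_lessThan_eq_tri: "(\<Sum>r<k. k - r) = tri k"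
proof (induction k)
  case 0 then show ?case by (simp add: tri_def)
next
  case (Suc k)
  have "(\<Sum>r<Suc k. Suc k - r) = (\<Sum>r<k. (k - r) + 1) + 1"
    by (simp add: Suc_diff_le)
  also have "\<dots> = tri k + k + 1" using Suc by (simp only: sum.distrib) simp
  finally show ?case by (simp add: tri_def)
qed

lemma length_svec_pairs: "length (svec_pairs k) = tri k"
  by (simp add: svec_pairs_def length_concat o_def sum_list_sum_nth atLeast0LessThan
      sum_diff_lessThan_eq_tri[symmetric])

lemma set_svec_pairs: "set (svec_pairs k) = {(r, c). r \<le> c \<and> c < k}"
proof
  show "{(r, c). r \<le> c \<and> c < k} \<subseteq> set (svec_pairs k)"
  proof clarify
    fix a b assume "a \<le> b" "b < k"
    then show "(a, b) \<in> set (svec_pairs k)" by (auto simp: svec_pairs_def intro!: bexI[of _ a])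
  qed
qed (auto simp: svec_pairs_def)

lemma distinct_svec_pairs: "distinct (svec_pairs k)"
  unfolding svec_pairs_def
proof (rule distinct_concat)
  show "distinct (map (\<lambda>r. map (Pair r) [r..<k]) [0..<k])"
  proof (subst distinct_map, intro conjI inj_onI)
    fix x y assume x: "x \<in> set [0..<k]" and e: "map (Pair x) [x..<k] = map (Pair y) [y..<k]"
    have "(x, x) \<in> set (map (Pair x) [x..<k])" using x by auto
    then have "(x, x) \<in> set (map (Pair y) [y..<k])" using e by simp
    then show "x = y" by auto
  qed simp
qed (auto simp: distinct_map inj_on_def)

lemma sum_svec_pairs: "(\<Sum>l<tri k. F (svec_pairs k ! l)) = (\<Sum>p\<in>{(r, c). r \<le> c \<and> c < k}. F p)"
proof -
  have "(\<Sum>l<tri k. F (svec_pairs k ! l)) = sum_list (map F (svec_pairs k))"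
    by (simp add: sum_list_sum_nth length_svec_pairs atLeast0LessThan)
  also have "\<dots> = sum F (set (svec_pairs k))"
    by (rule sum_list_distinct_conv_sum_set[OF distinct_svec_pairs])
  finally show ?thesis by (simp add: set_svec_pairs)
qed

definition basis_coeff :: "nat \<times> nat \<Rightarrow> nat \<Rightarrow> nat \<Rightarrow> real" where
  "basis_coeff p a b =
     (if (a = fst p \<and> b = snd p) \<or> (a = snd p \<and> b = fst p)
      then (if fst p = snd p then 1 else sqrt 2 / 2) else 0)"

lemma dim_Wmat [simp]: "dim_row (Wmat k) = tri k" "dim_col (Wmat k) = k * k"
  by (simp_all add: Wmat_def)

lemma Wmat_carrier [simp]: "Wmat k \<in> carrier_mat (tri k) (k * k)"
  by (simp add: Wmat_def)

lemma index_Wmat: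
  assumes "l < tri k" "i < k * k"
  shows "Wmat k $$ (l, i) = basis_coeff (svec_pairs k ! l) (i mod k) (i div k)"
proof -
  have "i div k < k" "i mod k < k" using div_mod_less_of_less_mult[OF assms(2)] by auto
  then show ?thesis using assms
    by (auto simp: Wmat_def vecm_def Ebas_def basis_coeff_def split: prod.splits)
qed

lemma sum_basis_coeff_mult:
  assumes "a < k" "b < k" "a' < k" "b' < k"
  shows "(\<Sum>p\<in>{(r, c). r \<le> c \<and> c < k}. basis_coeff p a b * basis_coeff p a' b')
     = (if a = a' \<and> b = b' then 1/2 else 0) + (if a = b' \<and> b = a' then 1/2 else 0)"
proof -
  let ?P = "{(r, c). r \<le> c \<and> c < k}" and ?p = "(min a b, max a b)"
  have fin: "finite ?P" by (rule finite_subset[of _ "{..<k} \<times> {..<k}"]) auto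
  have p: "?p \<in> ?P" using assms by auto
  have zero: "\<forall>p\<in>?P - {?p}. basis_coeff p a b * basis_coeff p a' b' = 0"
    by (auto simp: basis_coeff_def)
  have "(\<Sum>p\<in>?P. basis_coeff p a b * basis_coeff p a' b') = basis_coeff ?p a b * basis_coeff ?p a' b'"
    using sum.remove[OF fin p, of "\<lambda>p. basis_coeff p a b * basis_coeff p a' b'"] sum.neutral[OF zero]
    by simp
  also have "\<dots> = (if a = b then 1 else sqrt 2 / 2) *
      (if (a' = a \<and> b' = b) \<or> (a' = b \<and> b' = a) then (if a = b then 1 else sqrt 2 / 2) else 0)"
    unfolding basis_coeff_def min_def max_def by (cases "a \<le> b") auto
  also have "\<dots> = (if a = a' \<and> b = b' then 1/2 else 0) + (if a = b' \<and> b = a' then 1/2 else 0)"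
    by (cases "a = b") (auto simp: divide_simps)
  finally show ?thesis .
qed

section \<open>Kronecker products and the commutation matrix\<close>

lemma kron_carrier [simp]:
  "A \<in> carrier_mat p q \<Longrightarrow> B \<in> carrier_mat s t \<Longrightarrow> kron A B \<in> carrier_mat (p * s) (q * t)"
  by (simp add: kron_def)

lemma dim_kron [simp]:
  "dim_row (kron A B) = dim_row A * dim_row B" "dim_col (kron A B) = dim_col A * dim_col B"
  by (simp_all add: kron_def)

lemma index_kron:
  "i < dim_row A * dim_row B \<Longrightarrow> j < dim_col A * dim_col B \<Longrightarrow>
   kron A B $$ (i, j) = A $$ (i div dim_row B, j div dim_col B) * B $$ (i mod dim_row B, j mod dim_col B)"
  by (simp add: kron_def)

lemma dim_kron_vec [simp]: "dim_vec (kron_vec a b) = dim_vec a * dim_vec b"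
  by (simp add: kron_vec_def)

lemma kron_mult_kron:
  assumes A: "A \<in> carrier_mat p q" and C: "C \<in> carrier_mat q r"
    and B: "B \<in> carrier_mat s t" and D: "D \<in> carrier_mat t u"
  shows "kron A B * kron C D = kron (A * C) (B * D)"
proof (rule eq_matI)
  fix i j assume "i < dim_row (kron (A * C) (B * D))" and "j < dim_col (kron (A * C) (B * D))"
  then have i: "i < p * s" and j: "j < r * u" using A B C D by auto
  have ib: "i div s < p" "i mod s < s" and jb: "j div u < r" "j mod u < u"
    using div_mod_less_of_less_mult[OF i] div_mod_less_of_less_mult[OF j] by auto
  have "(kron A B * kron C D) $$ (i, j) = (\<Sum>m<q * t. kron A B $$ (i, m) * kron C D $$ (m, j))"
    using A B C D i j by (intro index_mult_mat_sum) auto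
  also have "\<dots> = (\<Sum>a<q. \<Sum>b<t. (A $$ (i div s, a) * C $$ (a, j div u)) * (B $$ (i mod s, b) * D $$ (b, j mod u)))"
    unfolding sum_lessThan_mult_nat
  proof (intro sum.cong refl)
    fix a b assume a: "a \<in> {..<q}" and b: "b \<in> {..<t}"
    have "a * t + b < q * t" using a b by (simp add: mult_add_less_mult)
    then show "kron A B $$ (i, a * t + b) * kron C D $$ (a * t + b, j) =
        (A $$ (i div s, a) * C $$ (a, j div u)) * (B $$ (i mod s, b) * D $$ (b, j mod u))"
      using A B C D i j b by (simp add: index_kron)
  qed
  also have "\<dots> = (A * C) $$ (i div s, j div u) * (B * D) $$ (i mod s, j mod u)"
    unfolding index_mult_mat_sum[OF A C ib(1) jb(1)] index_mult_mat_sum[OF B D ib(2) jb(2)] sum_product ..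
  also have "\<dots> = kron (A * C) (B * D) $$ (i, j)"
    using A B C D i j by (simp add: index_kron)
  finally show "(kron A B * kron C D) $$ (i, j) = kron (A * C) (B * D) $$ (i, j)" .
qed (use A B C D in auto)

lemma kron_mult_kron_vec:
  assumes A: "A \<in> carrier_mat p q" and B: "B \<in> carrier_mat s t"
    and a: "dim_vec a = q" and b: "dim_vec b = t"
  shows "kron A B *\<^sub>v kron_vec a b = kron_vec (A *\<^sub>v a) (B *\<^sub>v b)"
proof (rule eq_vecI)
  fix i assume "i < dim_vec (kron_vec (A *\<^sub>v a) (B *\<^sub>v b))"
  then have i: "i < p * s" using A B by simp
  have ib: "i div s < p" "i mod s < s" using div_mod_less_of_less_mult[OF i] by auto
  have "(kron A B *\<^sub>v kron_vec a b) $ i = (\<Sum>m<q * t. kron A B $$ (i, m) * kron_vec a b $ m)"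
    using A B a b i by (intro index_mult_mat_vec_sum) auto
  also have "\<dots> = (\<Sum>x<q. \<Sum>y<t. (A $$ (i div s, x) * a $ x) * (B $$ (i mod s, y) * b $ y))"
    unfolding sum_lessThan_mult_nat
  proof (intro sum.cong refl)
    fix x y assume "x \<in> {..<q}" and y: "y \<in> {..<t}"
    then have "x * t + y < q * t" by (simp add: mult_add_less_mult)
    then show "kron A B $$ (i, x * t + y) * kron_vec a b $ (x * t + y) =
        (A $$ (i div s, x) * a $ x) * (B $$ (i mod s, y) * b $ y)"
      using A B a b i y by (simp add: index_kron kron_vec_def)
  qed
  also have "\<dots> = (A *\<^sub>v a) $ (i div s) * (B *\<^sub>v b) $ (i mod s)"
    unfolding index_mult_mat_vec_sum[OF A a ib(1)] index_mult_mat_vec_sum[OF B b ib(2)] sum_product ..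
  also have "\<dots> = kron_vec (A *\<^sub>v a) (B *\<^sub>v b) $ i"
    using A B i by (simp add: kron_vec_def)
  finally show "(kron A B *\<^sub>v kron_vec a b) $ i = kron_vec (A *\<^sub>v a) (B *\<^sub>v b) $ i" .
qed (use A B in simp)

lemma transpose_kron: "transpose_mat (kron A B) = kron (transpose_mat A) (transpose_mat B)"
proof (rule eq_matI)
  fix i j
  assume "i < dim_row (kron (transpose_mat A) (transpose_mat B))"
    and "j < dim_col (kron (transpose_mat A) (transpose_mat B))"
  then have i: "i < dim_col A * dim_col B" and j: "j < dim_row A * dim_row B" by simp_all
  show "transpose_mat (kron A B) $$ (i, j) = kron (transpose_mat A) (transpose_mat B) $$ (i, j)"
    using div_mod_less_of_less_mult[OF i] div_mod_less_of_less_mult[OF j] i j by (simp add: kron_def)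
qed auto

text \<open>\<open>comm_mat k\<close> is the commutation matrix: it maps \<open>vecm Z\<close> to \<open>vecm (transpose_mat Z)\<close>
  for \<open>Z \<in> carrier_mat k k\<close>, and \<open>swap_index k\<close> is the corresponding permutation of positions.\<close>
definition swap_index :: "nat \<Rightarrow> nat \<Rightarrow> nat" where
  "swap_index k i = i mod k * k + i div k"

definition comm_mat :: "nat \<Rightarrow> real mat" where
  "comm_mat k = mat (k * k) (k * k) (\<lambda>(i, j). if j = swap_index k i then 1 else 0)"

lemma swap_index:
  assumes i: "i < k * k"
  shows "swap_index k i < k * k" "swap_index k i mod k = i div k" "swap_index k i div k = i mod k"
    "swap_index k (swap_index k i) = i"
proof -
  have b: "i div k < k" "i mod k < k" using div_mod_less_of_less_mult[OF i] by auto
  then show "swap_index k i < k * k" by (simp add: swap_index_def mult_add_less_mult)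
  show m: "swap_index k i mod k = i div k" using b by (simp add: swap_index_def)
  show d: "swap_index k i div k = i mod k" using b by (simp add: swap_index_def)
  show "swap_index k (swap_index k i) = i" unfolding swap_index_def[of k "swap_index k i"] m d
    by (simp add: mult.commute)
qed

lemma dim_comm_mat [simp]: "dim_row (comm_mat k) = k * k" "dim_col (comm_mat k) = k * k"
  by (simp_all add: comm_mat_def)

lemma comm_mat_carrier [simp]: "comm_mat k \<in> carrier_mat (k * k) (k * k)"
  by (simp add: comm_mat_def)

lemma comm_mat_mult:
  assumes M: "M \<in> carrier_mat (k * k) n"
  shows "comm_mat k * M = mat (k * k) n (\<lambda>(i, j). M $$ (swap_index k i, j))"
proof (rule eq_matI)
  fix i j assume "i < dim_row (mat (k * k) n (\<lambda>(i, j). M $$ (swap_index k i, j)))"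
    and "j < dim_col (mat (k * k) n (\<lambda>(i, j). M $$ (swap_index k i, j)))"
  then have i: "i < k * k" and j: "j < n" by auto
  have "(comm_mat k * M) $$ (i, j) = (\<Sum>m<k * k. comm_mat k $$ (i, m) * M $$ (m, j))"
    using M i j by (intro index_mult_mat_sum) auto
  also have "\<dots> = (\<Sum>m<k * k. if m = swap_index k i then M $$ (m, j) else 0)"
    by (rule sum.cong) (use i in \<open>auto simp: comm_mat_def\<close>)
  also have "\<dots> = M $$ (swap_index k i, j)" using swap_index[OF i] by (simp add: sum.delta')
  finally show "(comm_mat k * M) $$ (i, j) = mat (k * k) n (\<lambda>(i, j). M $$ (swap_index k i, j)) $$ (i, j)"
    using i j by simp
qed (use M in auto)

lemma mult_comm_mat:
  assumes M: "M \<in> carrier_mat n (k * k)"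
  shows "M * comm_mat k = mat n (k * k) (\<lambda>(i, j). M $$ (i, swap_index k j))"
proof (rule eq_matI)
  fix i j assume "i < dim_row (mat n (k * k) (\<lambda>(i, j). M $$ (i, swap_index k j)))"
    and "j < dim_col (mat n (k * k) (\<lambda>(i, j). M $$ (i, swap_index k j)))"
  then have i: "i < n" and j: "j < k * k" by auto
  have "(M * comm_mat k) $$ (i, j) = (\<Sum>m<k * k. M $$ (i, m) * comm_mat k $$ (m, j))"
    using M i j by (intro index_mult_mat_sum) auto
  also have "\<dots> = (\<Sum>m<k * k. if m = swap_index k j then M $$ (i, m) else 0)"
  proof (rule sum.cong)
    fix m assume m: "m \<in> {..<k * k}"
    then have "j = swap_index k m \<longleftrightarrow> m = swap_index k j" using swap_index j by auto
    then show "M $$ (i, m) * comm_mat k $$ (m, j) = (if m = swap_index k j then M $$ (i, m) else 0)"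
      using m j by (auto simp: comm_mat_def)
  qed simp
  also have "\<dots> = M $$ (i, swap_index k j)" using swap_index[OF j] by (simp add: sum.delta')
  finally show "(M * comm_mat k) $$ (i, j) = mat n (k * k) (\<lambda>(i, j). M $$ (i, swap_index k j)) $$ (i, j)"
    using i j by simp
qed (use M in auto)

lemma comm_mat_mult_kron:
  assumes A: "A \<in> carrier_mat k k" and B: "B \<in> carrier_mat k k"
  shows "comm_mat k * kron A B = kron B A * comm_mat k"
  unfolding comm_mat_mult[OF kron_carrier[OF A B]] mult_comm_mat[OF kron_carrier[OF B A]]
proof (rule eq_matI)
  fix i j assume "i < dim_row (mat (k * k) (k * k) (\<lambda>(i, j). kron B A $$ (i, swap_index k j)))"
    and "j < dim_col (mat (k * k) (k * k) (\<lambda>(i, j). kron B A $$ (i, swap_index k j)))"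
  then have i: "i < k * k" and j: "j < k * k" by auto
  show "mat (k * k) (k * k) (\<lambda>(i, j). kron A B $$ (swap_index k i, j)) $$ (i, j) =
      mat (k * k) (k * k) (\<lambda>(i, j). kron B A $$ (i, swap_index k j)) $$ (i, j)"
    using i j A B swap_index[OF i] swap_index[OF j] by (simp add: index_kron)
qed auto

lemma Wmat_mult_comm_mat: "Wmat k * comm_mat k = Wmat k"
  unfolding mult_comm_mat[OF Wmat_carrier]
proof (rule eq_matI)
  fix l j assume "l < dim_row (Wmat k)" and "j < dim_col (Wmat k)"
  then have l: "l < tri k" and j: "j < k * k" by auto
  show "mat (tri k) (k * k) (\<lambda>(i, j). Wmat k $$ (i, swap_index k j)) $$ (l, j) = Wmat k $$ (l, j)"
    using l j swap_index[OF j] by (simp add: index_Wmat basis_coeff_def)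
qed auto

lemma comm_mat_mult_transpose_Wmat: "comm_mat k * transpose_mat (Wmat k) = transpose_mat (Wmat k)"
  unfolding comm_mat_mult[of "transpose_mat (Wmat k)" k "tri k", simplified]
proof (rule eq_matI)
  fix i l assume "i < dim_row (transpose_mat (Wmat k))" and "l < dim_col (transpose_mat (Wmat k))"
  then have i: "i < k * k" and l: "l < tri k" by auto
  show "mat (k * k) (tri k) (\<lambda>(i, j). transpose_mat (Wmat k) $$ (swap_index k i, j)) $$ (i, l)
      = transpose_mat (Wmat k) $$ (i, l)"
    using l i swap_index[OF i] by (simp add: index_Wmat basis_coeff_def)
qed auto

lemma transpose_Wmat_mult_Wmat: "transpose_mat (Wmat k) * Wmat k = (1/2) \<cdot>\<^sub>m (1\<^sub>m (k * k) + comm_mat k)"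
proof (rule eq_matI)
  fix i j assume "i < dim_row ((1/2) \<cdot>\<^sub>m (1\<^sub>m (k * k) + comm_mat k))"
    and "j < dim_col ((1/2) \<cdot>\<^sub>m (1\<^sub>m (k * k) + comm_mat k))"
  then have i: "i < k * k" and j: "j < k * k" by auto
  have bi: "i div k < k" "i mod k < k" and bj: "j div k < k" "j mod k < k"
    using div_mod_less_of_less_mult[OF i] div_mod_less_of_less_mult[OF j] by auto
  have "(transpose_mat (Wmat k) * Wmat k) $$ (i, j)
      = (\<Sum>l<tri k. transpose_mat (Wmat k) $$ (i, l) * Wmat k $$ (l, j))"
    using i j by (intro index_mult_mat_sum) auto
  also have "\<dots> = (\<Sum>l<tri k. basis_coeff (svec_pairs k ! l) (i mod k) (i div k)
      * basis_coeff (svec_pairs k ! l) (j mod k) (j div k))"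
    by (rule sum.cong) (use i j in \<open>auto simp: index_Wmat\<close>)
  also have "\<dots> = (if i mod k = j mod k \<and> i div k = j div k then 1/2 else 0)
      + (if i mod k = j div k \<and> i div k = j mod k then 1/2 else 0)"
    using sum_svec_pairs[of "\<lambda>p. basis_coeff p (i mod k) (i div k) * basis_coeff p (j mod k) (j div k)" k]
      sum_basis_coeff_mult[OF bi(2) bi(1) bj(2) bj(1)] by simp
  also have "\<dots> = (1/2) * ((if i = j then 1 else 0) + (if j = swap_index k i then 1 else 0))"
  proof -
    have "(i mod k = j mod k \<and> i div k = j div k) = (i = j)"
      by (metis div_mod_decomp)
    moreover have "(i mod k = j div k \<and> i div k = j mod k) = (j = swap_index k i)"
      using swap_index[OF i] by (metis div_mod_decomp swap_index_def)
    ultimately show ?thesis by simp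
  qed
  also have "\<dots> = ((1/2) \<cdot>\<^sub>m (1\<^sub>m (k * k) + comm_mat k)) $$ (i, j)"
    using i j by (simp add: comm_mat_def)
  finally show "(transpose_mat (Wmat k) * Wmat k) $$ (i, j) = ((1/2) \<cdot>\<^sub>m (1\<^sub>m (k * k) + comm_mat k)) $$ (i, j)" .
qed auto

section \<open>The symmetric Kronecker product\<close>

lemma skron_square: "A \<in> carrier_mat k k \<Longrightarrow> skron A B = Wmat k * kron A B * transpose_mat (Wmat k)"
  by (simp add: skron_def)

lemma dim_skron [simp]: "dim_row (skron A B) = tri (dim_row A)" "dim_col (skron A B) = tri (dim_col A)"
  by (simp_all add: skron_def)

lemma skron_carrier [simp]:
  "A \<in> carrier_mat k k \<Longrightarrow> B \<in> carrier_mat k k \<Longrightarrow> skron A B \<in> carrier_mat (tri k) (tri k)"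
  by (simp add: skron_square) (rule carrier_matI; simp)

lemma transpose_skron:
  assumes A: "A \<in> carrier_mat k k" and B: "B \<in> carrier_mat k k"
  shows "transpose_mat (skron A B) = skron (transpose_mat A) (transpose_mat B)"
proof -
  have "transpose_mat (skron A B) = Wmat k * transpose_mat (kron A B) * transpose_mat (Wmat k)"
    using A B by (simp add: skron_square transpose_mult_dim assoc_mult_mat_dim)
  then show ?thesis using A B by (simp add: skron_square transpose_kron)
qed

lemma mult_transpose_Wmat_mult_Wmat:
  assumes X: "X \<in> carrier_mat n (k * k)"
  shows "X * (transpose_mat (Wmat k) * Wmat k) = (1/2) \<cdot>\<^sub>m (X + X * comm_mat k)"
  unfolding transpose_Wmat_mult_Wmat mult_smult_distrib[OF X add_carrier_mat[OF comm_mat_carrier[of k]]]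
    mult_add_distrib_mat[OF X one_carrier_mat[of "k * k"] comm_mat_carrier[of k]] right_mult_one_mat[OF X] ..

lemma skron_mult_Wmat:
  assumes A: "A \<in> carrier_mat k k"
  shows "skron A A * Wmat k = Wmat k * kron A A"
proof -
  let ?X = "Wmat k * kron A A"
  have X: "?X \<in> carrier_mat (tri k) (k * k)" using A by (intro carrier_matI) simp_all
  have "?X * comm_mat k = Wmat k * comm_mat k * kron A A"
    using A by (simp add: assoc_mult_mat_dim comm_mat_mult_kron)
  then have swap: "?X * comm_mat k = ?X" by (simp add: Wmat_mult_comm_mat)
  have "skron A A * Wmat k = ?X * (transpose_mat (Wmat k) * Wmat k)"
    using A by (simp add: skron_square assoc_mult_mat_dim)
  also have "\<dots> = ?X" unfolding mult_transpose_Wmat_mult_Wmat[OF X] swap half_smult_add_self ..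
  finally show ?thesis .
qed

lemma skron_mult_skron:
  assumes A: "A \<in> carrier_mat k k" and B: "B \<in> carrier_mat k k"
    and C: "C \<in> carrier_mat k k" and D: "D \<in> carrier_mat k k"
  shows "skron A B * skron C D = (1/2) \<cdot>\<^sub>m (skron (A * C) (B * D) + skron (A * D) (B * C))"
proof -
  let ?X = "Wmat k * kron A B" and ?Y = "kron C D * transpose_mat (Wmat k)"
  have X: "?X \<in> carrier_mat (tri k) (k * k)" and Y: "?Y \<in> carrier_mat (k * k) (tri k)"
    using assms by (auto intro!: carrier_matI)
  have XY: "?X * ?Y = skron (A * C) (B * D)"
    unfolding skron_square[OF mult_carrier_mat[OF A C]] kron_mult_kron[OF A C B D, symmetric]
    using assms by (simp add: assoc_mult_mat_dim)
  have "?X * comm_mat k * ?Y = Wmat k * (kron A B * (comm_mat k * kron C D)) * transpose_mat (Wmat k)"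
    using assms by (simp add: assoc_mult_mat_dim)
  also have "\<dots> = Wmat k * (kron A B * kron D C) * (comm_mat k * transpose_mat (Wmat k))"
    using assms by (simp add: comm_mat_mult_kron assoc_mult_mat_dim)
  also have "\<dots> = skron (A * D) (B * C)"
    using assms by (simp add: comm_mat_mult_transpose_Wmat skron_square[of "A * D" k] kron_mult_kron)
  finally have XSY: "?X * comm_mat k * ?Y = skron (A * D) (B * C)" .
  have "skron A B * skron C D = ?X * (transpose_mat (Wmat k) * Wmat k) * ?Y"
    using assms by (simp add: skron_square assoc_mult_mat_dim)
  also have "\<dots> = (1/2) \<cdot>\<^sub>m (?X * ?Y + ?X * comm_mat k * ?Y)"
    unfolding mult_transpose_Wmat_mult_Wmat[OF X]
      mult_smult_assoc_mat[OF add_carrier_mat[OF mult_carrier_mat[OF X comm_mat_carrier]] Y]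
      add_mult_distrib_mat[OF X mult_carrier_mat[OF X comm_mat_carrier] Y] ..
  finally show ?thesis unfolding XY XSY .
qed

lemma skron_commute:
  assumes A: "A \<in> carrier_mat k k" and B: "B \<in> carrier_mat k k"
  shows "skron A B = skron B A"
proof -
  have "skron A B = Wmat k * comm_mat k * kron A B * transpose_mat (Wmat k)"
    unfolding Wmat_mult_comm_mat skron_square[OF A] ..
  also have "\<dots> = Wmat k * kron B A * (comm_mat k * transpose_mat (Wmat k))"
    using A B by (simp add: comm_mat_mult_kron assoc_mult_mat_dim)
  also have "\<dots> = skron B A"
    unfolding skron_square[OF B] comm_mat_mult_transpose_Wmat ..
  finally show ?thesis .
qed

lemma skron_one_mult_skron_self:
  assumes S: "S \<in> carrier_mat k k" and M: "M \<in> carrier_mat k k" and B: "B \<in> carrier_mat k k"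
    and BS: "B * S = S * M"
  shows "skron (1\<^sub>m k) B * skron S S = skron S S * skron (1\<^sub>m k) M"
proof -
  have "skron (1\<^sub>m k) B * skron S S = skron S (S * M)"
    unfolding skron_mult_skron[OF one_carrier_mat B S S] left_mult_one_mat[OF S] BS
      half_smult_add_self ..
  also have "\<dots> = skron S S * skron (1\<^sub>m k) M"
    unfolding skron_mult_skron[OF S S one_carrier_mat M] right_mult_one_mat[OF S]
      skron_commute[OF mult_carrier_mat[OF S M] S] half_smult_add_self ..
  finally show ?thesis .
qed

lemma skron_row_mult_mat_vec:
  assumes S: "S \<in> carrier_mat k k" and a: "dim_vec a = k" and b: "dim_vec b = k"
  shows "skron_row (S *\<^sub>v a) (S *\<^sub>v b) = skron S S *\<^sub>v skron_row a b"
proof -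
  have "skron S S *\<^sub>v skron_row a b = (skron S S * Wmat k) *\<^sub>v kron_vec a b"
    using S a b by (simp add: skron_row_def assoc_mult_mat_vec_dim)
  also have "\<dots> = Wmat k *\<^sub>v (kron S S *\<^sub>v kron_vec a b)"
    using S a b by (simp add: skron_mult_Wmat assoc_mult_mat_vec_dim)
  also have "\<dots> = skron_row (S *\<^sub>v a) (S *\<^sub>v b)"
    using S a b by (simp add: kron_mult_kron_vec skron_row_def)
  finally show ?thesis ..
qed

lemma vecm_mult_mat:
  assumes A: "A \<in> carrier_mat p q" and Z: "Z \<in> carrier_mat q r" and B: "B \<in> carrier_mat r s"
  shows "vecm (A * Z * B) = kron (transpose_mat B) A *\<^sub>v vecm Z"
proof (rule eq_vecI)
  have K: "kron (transpose_mat B) A \<in> carrier_mat (s * p) (r * q)" using A B by simp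
  fix i assume "i < dim_vec (kron (transpose_mat B) A *\<^sub>v vecm Z)"
  then have i: "i < s * p" using A B by simp
  have bi: "i div p < s" "i mod p < p" using div_mod_less_of_less_mult[OF i] by auto
  have "vecm (A * Z * B) $ i = (A * Z * B) $$ (i mod p, i div p)"
    using A Z B i by (simp add: vecm_def mult.commute)
  also have "\<dots> = (\<Sum>c<r. (A * Z) $$ (i mod p, c) * B $$ (c, i div p))"
    using A Z B bi by (intro index_mult_mat_sum) auto
  also have "\<dots> = (\<Sum>c<r. (\<Sum>a<q. A $$ (i mod p, a) * Z $$ (a, c)) * B $$ (c, i div p))"
    using bi by (intro sum.cong refl) (simp add: index_mult_mat_sum[OF A Z])
  also have "\<dots> = (\<Sum>c<r. \<Sum>a<q. kron (transpose_mat B) A $$ (i, c * q + a) * vecm Z $ (c * q + a))"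
  proof (rule sum.cong[OF refl])
    fix c assume c: "c \<in> {..<r}"
    have "(\<Sum>a<q. A $$ (i mod p, a) * Z $$ (a, c)) * B $$ (c, i div p)
        = (\<Sum>a<q. B $$ (c, i div p) * A $$ (i mod p, a) * Z $$ (a, c))"
      by (simp add: sum_distrib_left sum_distrib_right mult_ac)
    also have "\<dots> = (\<Sum>a<q. kron (transpose_mat B) A $$ (i, c * q + a) * vecm Z $ (c * q + a))"
    proof (rule sum.cong[OF refl])
      fix a assume a: "a \<in> {..<q}"
      then have "c * q + a < r * q" using c by (simp add: mult_add_less_mult)
      then have "c * q + a < q * r" "c * q + a < r * q" by (simp_all only: mult.commute)
      then show "B $$ (c, i div p) * A $$ (i mod p, a) * Z $$ (a, c)
          = kron (transpose_mat B) A $$ (i, c * q + a) * vecm Z $ (c * q + a)"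
        using A Z B i bi c a by (simp add: index_kron vecm_def)
    qed
    finally show "(\<Sum>a<q. A $$ (i mod p, a) * Z $$ (a, c)) * B $$ (c, i div p)
        = (\<Sum>a<q. kron (transpose_mat B) A $$ (i, c * q + a) * vecm Z $ (c * q + a))" .
  qed
  also have "\<dots> = (\<Sum>m<r * q. kron (transpose_mat B) A $$ (i, m) * vecm Z $ m)"
    by (rule sum_lessThan_mult_nat[symmetric])
  also have "\<dots> = (kron (transpose_mat B) A *\<^sub>v vecm Z) $ i"
    using Z by (intro index_mult_mat_vec_sum[symmetric, OF K _ i]) (simp add: mult.commute)
  finally show "vecm (A * Z * B) $ i = (kron (transpose_mat B) A *\<^sub>v vecm Z) $ i" .
qed (use A Z B in simp)

lemma skron_mult_svec:
  assumes A: "A \<in> carrier_mat k k" and Z: "Z \<in> carrier_mat k k"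
  shows "skron A A *\<^sub>v svec Z = svec (A * Z * transpose_mat A)"
proof -
  have "skron A A *\<^sub>v svec Z = (skron A A * Wmat k) *\<^sub>v vecm Z"
    using A Z by (simp add: svec_def assoc_mult_mat_vec_dim)
  also have "\<dots> = Wmat k *\<^sub>v (kron A A *\<^sub>v vecm Z)"
    using A Z by (simp add: skron_mult_Wmat assoc_mult_mat_vec_dim)
  also have "kron A A *\<^sub>v vecm Z = vecm (A * Z * transpose_mat A)"
    using vecm_mult_mat[OF A Z, of "transpose_mat A"] A by simp
  finally show ?thesis using A by (simp add: svec_def)
qed

lemma transpose_skron_mult_svec_congruence:
  assumes S: "S \<in> carrier_mat k k" and Si: "Si \<in> carrier_mat k k" and Y: "Y \<in> carrier_mat k k"
    and inv: "Si * S = 1\<^sub>m k"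
  shows "transpose_mat (skron S S) *\<^sub>v svec (transpose_mat Si * Y * Si) = svec Y"
proof -
  have "transpose_mat S * (transpose_mat Si * Y * Si) * S = transpose_mat (Si * S) * Y * (Si * S)"
    using S Si Y by (simp add: transpose_mult[OF Si S] assoc_mult_mat_dim)
  then have "transpose_mat S * (transpose_mat Si * Y * Si) * transpose_mat (transpose_mat S) = Y"
    using Y by (simp add: inv)
  then show ?thesis
    using S Si Y by (simp add: transpose_skron skron_mult_svec)
qed

section \<open>Data matrices under a linear change of coordinates\<close>

lemma integrable_on_mult_of_square_integrable:
  fixes f g :: "real \<Rightarrow> real"
  assumes f: "f measurable_on {a..b}" and g: "g measurable_on {a..b}"
    and f2: "(\<lambda>x. (f x)^2) integrable_on {a..b}" and g2: "(\<lambda>x. (g x)^2) integrable_on {a..b}"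
  shows "(\<lambda>x. f x * g x) integrable_on {a..b}"
proof -
  have L: "{a..b} \<in> sets lebesgue" by simp
  have "(\<lambda>x. f x * g x) measurable_on {a..b}"
    using measurable_on_bilinear[OF bilinear_times f g] .
  then have mb: "(\<lambda>x. f x * g x) \<in> borel_measurable (lebesgue_on {a..b})"
    using measurable_on_iff_borel_measurable[OF L] by blast
  have h: "(\<lambda>x. ((f x)^2 + (g x)^2) / 2) integrable_on {a..b}"
    using integrable_add[OF f2 g2] by simp
  have bound: "\<bar>f x * g x\<bar> \<le> ((f x)^2 + (g x)^2) / 2" for x
  proof -
    have "0 \<le> (\<bar>f x\<bar> - \<bar>g x\<bar>)^2" by simp
    then show ?thesis by (simp add: power2_eq_square algebra_simps abs_mult)
  qed
  show ?thesis
    by (rule measurable_bounded_by_integrable_imp_integrable_real[OF mb h _ L]) (use bound in auto)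
qed

lemma sq_integrable_on_mult_integrable_on:
  fixes x y :: "real \<Rightarrow> real vec"
  assumes x: "sq_integrable_on k x a b" and y: "sq_integrable_on k y a b"
    and p: "p < k" and q: "q < k" and sub: "{c..d} \<subseteq> {a..b}"
  shows "(\<lambda>\<tau>. x \<tau> $ p * y \<tau> $ q) integrable_on {c..d}"
proof -
  have "(\<lambda>\<tau>. x \<tau> $ p * y \<tau> $ q) integrable_on {a..b}"
    using x y p q by (intro integrable_on_mult_of_square_integrable) (auto simp: sq_integrable_on_def)
  then show ?thesis using sub by (rule integrable_on_subinterval)
qed

lemma dim_skron_row [simp]: "dim_vec (skron_row a b) = tri (dim_vec a)"
  by (simp add: skron_row_def)

lemma integrable_on_skron_row_index:
  fixes x y :: "real \<Rightarrow> real vec"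
  assumes dx: "\<And>\<tau>. dim_vec (x \<tau>) = k" and dy: "\<And>\<tau>. dim_vec (y \<tau>) = k"
    and x: "sq_integrable_on k x a b" and y: "sq_integrable_on k y a b"
    and sub: "{c..d} \<subseteq> {a..b}" and i: "i < tri k"
  shows "(\<lambda>\<tau>. skron_row (x \<tau>) (y \<tau>) $ i) integrable_on {c..d}"
proof -
  have "skron_row (x \<tau>) (y \<tau>) $ i = (\<Sum>m<k * k. Wmat k $$ (i, m) * kron_vec (x \<tau>) (y \<tau>) $ m)" for \<tau>
    unfolding skron_row_def dx by (rule index_mult_mat_vec_sum[OF Wmat_carrier _ i]) (simp add: dx dy)
  also have "\<dots>\<tau> = (\<Sum>m<k * k. Wmat k $$ (i, m) * (x \<tau> $ (m div k) * y \<tau> $ (m mod k)))" for \<tau>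
    using dx dy by (intro sum.cong) (auto simp: kron_vec_def)
  finally have row_formula: "skron_row (x \<tau>) (y \<tau>) $ i
      = (\<Sum>m<k * k. Wmat k $$ (i, m) * (x \<tau> $ (m div k) * y \<tau> $ (m mod k)))" for \<tau> .
  moreover have "(\<lambda>\<tau>. \<Sum>m<k * k. Wmat k $$ (i, m) * (x \<tau> $ (m div k) * y \<tau> $ (m mod k))) integrable_on {c..d}"
  proof (intro integrable_sum integrable_on_mult_right)
    fix m assume "m \<in> {..<k * k}"
    then have "m div k < k" "m mod k < k" using div_mod_less_of_less_mult[of m k k] by auto
    then show "(\<lambda>\<tau>. x \<tau> $ (m div k) * y \<tau> $ (m mod k)) integrable_on {c..d}"
      by (intro sq_integrable_on_mult_integrable_on[OF x y _ _ sub])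
  qed simp
  then show ?thesis unfolding row_formula .
qed

lemma sample_interval_subset:
  assumes mono: "\<forall>r<l. t r \<le> t (Suc r)" and r: "r < l"
  shows "{t r..t (Suc r)} \<subseteq> {t 0..t (l::nat) :: real}"
proof -
  have "t i \<le> t j" if "i \<le> j" "j \<le> l" for i j
    using lift_Suc_mono_le_ivl[of "{..<l}" t i j] mono that by (auto simp: subset_iff)
  then have "t 0 \<le> t r" "t (Suc r) \<le> t l" using r by simp_all
  then show ?thesis by auto
qed

lemma delta_mat_carrier: "delta_mat k t l x y \<in> carrier_mat l (tri k)"
  by (simp add: delta_mat_def)

lemma Int_mat_carrier: "Int_mat k t l x y \<in> carrier_mat l (tri k)"
  by (simp add: Int_mat_def)

lemma dim_Int_mat [simp]: "dim_row (Int_mat k t l x y) = l" "dim_col (Int_mat k t l x y) = tri k"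
  by (simp_all add: Int_mat_def)

lemma row_delta_mat:
  assumes "\<And>\<tau>. dim_vec (y \<tau>) = k" and "r < l"
  shows "row (delta_mat k t l x y) r = skron_row (x (t (Suc r)) + y (t r)) (x (t (Suc r)) - y (t r))"
  using assms by (intro eq_vecI) (simp_all add: delta_mat_def)

lemma row_Int_mat:
  assumes "r < l"
  shows "row (Int_mat k t l x y) r = vec (tri k) (\<lambda>c. integral {t r..t (Suc r)} (\<lambda>\<tau>. skron_row (x \<tau>) (y \<tau>) $ c))"
  using assms by (intro eq_vecI) (simp_all add: Int_mat_def)

lemma delta_mat_mult_mat_vec:
  assumes S: "S \<in> carrier_mat k k" and dx: "\<And>\<tau>. dim_vec (x \<tau>) = k" and dy: "\<And>\<tau>. dim_vec (y \<tau>) = k"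
  shows "delta_mat k t l (\<lambda>\<tau>. S *\<^sub>v x \<tau>) (\<lambda>\<tau>. S *\<^sub>v y \<tau>) = delta_mat k t l x y * transpose_mat (skron S S)"
proof -
  have xc: "x \<tau> \<in> carrier_vec k" and yc: "y \<tau> \<in> carrier_vec k" for \<tau>
    using dx dy by (auto intro: carrier_vecI)
  have distrib: "S *\<^sub>v x (t (Suc r)) + S *\<^sub>v y (t r) = S *\<^sub>v (x (t (Suc r)) + y (t r))"
    "S *\<^sub>v x (t (Suc r)) - S *\<^sub>v y (t r) = S *\<^sub>v (x (t (Suc r)) - y (t r))" for r
    using mult_add_distrib_mat_vec[OF S xc yc] mult_minus_distrib_mat_vec[OF S xc yc] by simp_all
  show ?thesis unfolding mult_transpose_mat_rows[OF delta_mat_carrier skron_carrier[OF S S]]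
  proof (rule eq_matI)
    fix r c assume "r < dim_row (mat l (tri k) (\<lambda>(r, c). (skron S S *\<^sub>v row (delta_mat k t l x y) r) $ c))"
      and "c < dim_col (mat l (tri k) (\<lambda>(r, c). (skron S S *\<^sub>v row (delta_mat k t l x y) r) $ c))"
    then have r: "r < l" and c: "c < tri k" by auto
    have "delta_mat k t l (\<lambda>\<tau>. S *\<^sub>v x \<tau>) (\<lambda>\<tau>. S *\<^sub>v y \<tau>) $$ (r, c)
        = skron_row (S *\<^sub>v (x (t (Suc r)) + y (t r))) (S *\<^sub>v (x (t (Suc r)) - y (t r))) $ c"
      using r c S dx dy distrib by (simp add: delta_mat_def)
    also have "\<dots> = (skron S S *\<^sub>v row (delta_mat k t l x y) r) $ c"
      using S dx dy by (simp add: skron_row_mult_mat_vec row_delta_mat[OF dy r])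
    finally show "delta_mat k t l (\<lambda>\<tau>. S *\<^sub>v x \<tau>) (\<lambda>\<tau>. S *\<^sub>v y \<tau>) $$ (r, c)
        = mat l (tri k) (\<lambda>(r, c). (skron S S *\<^sub>v row (delta_mat k t l x y) r) $ c) $$ (r, c)"
      using r c by simp
  qed (simp_all add: delta_mat_def)
qed

lemma integral_mult_mat_vec_index:
  fixes w :: "real \<Rightarrow> real vec"
  assumes T: "T \<in> carrier_mat n m" and w: "\<And>\<tau>. dim_vec (w \<tau>) = m"
    and int: "\<And>d. d < m \<Longrightarrow> (\<lambda>\<tau>. w \<tau> $ d) integrable_on I" and c: "c < n"
  shows "integral I (\<lambda>\<tau>. (T *\<^sub>v w \<tau>) $ c) = (T *\<^sub>v vec m (\<lambda>d. integral I (\<lambda>\<tau>. w \<tau> $ d))) $ c"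
proof -
  have "integral I (\<lambda>\<tau>. (T *\<^sub>v w \<tau>) $ c) = integral I (\<lambda>\<tau>. \<Sum>d<m. T $$ (c, d) * w \<tau> $ d)"
    by (intro integral_cong) (rule index_mult_mat_vec_sum[OF T w c])
  also have "\<dots> = (\<Sum>d<m. T $$ (c, d) * integral I (\<lambda>\<tau>. w \<tau> $ d))"
    by (subst integral_sum) (auto intro: int integrable_on_mult_right)
  also have "\<dots> = (T *\<^sub>v vec m (\<lambda>d. integral I (\<lambda>\<tau>. w \<tau> $ d))) $ c"
    by (subst index_mult_mat_vec_sum[OF T _ c]) (auto intro!: sum.cong)
  finally show ?thesis .
qed

lemma Int_mat_mult_mat_vec:
  assumes S: "S \<in> carrier_mat k k" and dx: "\<And>\<tau>. dim_vec (x \<tau>) = k" and dy: "\<And>\<tau>. dim_vec (y \<tau>) = k"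
    and x: "sq_integrable_on k x (t 0) (t l)" and y: "sq_integrable_on k y (t 0) (t l)"
    and mono: "\<forall>r<l. t r \<le> t (Suc r)"
  shows "Int_mat k t l (\<lambda>\<tau>. S *\<^sub>v x \<tau>) (\<lambda>\<tau>. S *\<^sub>v y \<tau>) = Int_mat k t l x y * transpose_mat (skron S S)"
  unfolding mult_transpose_mat_rows[OF Int_mat_carrier skron_carrier[OF S S]]
proof (intro eq_matI)
  fix r c assume "r < dim_row (mat l (tri k) (\<lambda>(r, c). (skron S S *\<^sub>v row (Int_mat k t l x y) r) $ c))"
    and "c < dim_col (mat l (tri k) (\<lambda>(r, c). (skron S S *\<^sub>v row (Int_mat k t l x y) r) $ c))"
  then have r: "r < l" and c: "c < tri k" by auto
  have "Int_mat k t l (\<lambda>\<tau>. S *\<^sub>v x \<tau>) (\<lambda>\<tau>. S *\<^sub>v y \<tau>) $$ (r, c)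
      = integral {t r..t (Suc r)} (\<lambda>\<tau>. (skron S S *\<^sub>v skron_row (x \<tau>) (y \<tau>)) $ c)"
    using S dx dy r c by (simp add: Int_mat_def skron_row_mult_mat_vec)
  also have "\<dots> = (skron S S *\<^sub>v row (Int_mat k t l x y) r) $ c"
    unfolding row_Int_mat[OF r]
    using integrable_on_skron_row_index[OF dx dy x y sample_interval_subset[OF mono r]] dx
    by (intro integral_mult_mat_vec_index[OF skron_carrier[OF S S] _ _ c]) simp_all
  finally show "Int_mat k t l (\<lambda>\<tau>. S *\<^sub>v x \<tau>) (\<lambda>\<tau>. S *\<^sub>v y \<tau>) $$ (r, c)
      = mat l (tri k) (\<lambda>(r, c). (skron S S *\<^sub>v row (Int_mat k t l x y) r) $ c) $$ (r, c)"
    using r c by simp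
qed (simp_all add: Int_mat_def)

lemma Int_mat_cong:
  assumes mono: "\<forall>r<l. t r \<le> t (Suc r)" and y: "\<And>\<tau>. \<tau> \<in> {t 0..t l} \<Longrightarrow> y \<tau> = y' \<tau>"
  shows "Int_mat k t l x y = Int_mat k t l x y'"
proof -
  have "y \<tau> = y' \<tau>" if "r < l" "\<tau> \<in> {t r..t (Suc r)}" for r \<tau>
    using y sample_interval_subset[OF mono] that by blast
  then show ?thesis unfolding Int_mat_def by (intro eq_matI) (auto intro!: integral_cong)
qed

lemma dim_svec [simp]: "dim_vec (svec P) = tri (dim_row P)"
  by (simp add: svec_def)

lemma reg_A_modulation:
  fixes x y w :: "real \<Rightarrow> real vec"
  assumes S: "S \<in> carrier_mat k k" and M: "M \<in> carrier_mat k k" and B: "B \<in> carrier_mat k k"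
    and BS: "B * S = S * M"
    and dx: "\<And>\<tau>. dim_vec (x \<tau>) = k" and dy: "\<And>\<tau>. dim_vec (y \<tau>) = k" and dw: "\<And>\<tau>. dim_vec (w \<tau>) = k"
    and x: "sq_integrable_on k x (t 0) (t l)" and y: "sq_integrable_on k y (t 0) (t l)"
    and w: "sq_integrable_on k w (t 0) (t l)" and mono: "\<forall>r<l. t r \<le> t (Suc r)"
  shows "reg_A k t l (\<lambda>\<tau>. S *\<^sub>v x \<tau>) (\<lambda>\<tau>. S *\<^sub>v y \<tau>) (\<lambda>\<tau>. S *\<^sub>v w \<tau>) B
    = reg_A k t l x y w M * transpose_mat (skron S S)"
proof -
  let ?T = "transpose_mat (skron S S)" and ?X = "Int_mat k t l x x"
  let ?G = "Int_mat k t l x y" and ?W = "Int_mat k t l x w" and ?D = "delta_mat k t l x x"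
  let ?CB = "transpose_mat (skron (1\<^sub>m k) B)" and ?CM = "transpose_mat (skron (1\<^sub>m k) M)"
  have T: "?T \<in> carrier_mat (tri k) (tri k)" using S by simp
  have "?T * ?CB = transpose_mat (skron (1\<^sub>m k) B * skron S S)"
    using S B by (simp add: transpose_mult_dim)
  also have "\<dots> = ?CM * ?T"
    using S M by (simp add: skron_one_mult_skron_self[OF S M B BS] transpose_mult_dim)
  finally have commute: "?T * ?CB = ?CM * ?T" .
  have "reg_A k t l (\<lambda>\<tau>. S *\<^sub>v x \<tau>) (\<lambda>\<tau>. S *\<^sub>v y \<tau>) (\<lambda>\<tau>. S *\<^sub>v w \<tau>) B
      = ?D * ?T - 2 \<cdot>\<^sub>m (?X * ?T * ?CB + ?G * ?T + ?W * ?T)"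
    unfolding reg_A_def delta_mat_mult_mat_vec[OF S dx dx] Int_mat_mult_mat_vec[OF S dx dx x x mono]
      Int_mat_mult_mat_vec[OF S dx dy x y mono] Int_mat_mult_mat_vec[OF S dx dw x w mono] ..
  also have "?X * ?T * ?CB = ?X * ?CM * ?T"
    using S B M by (simp add: assoc_mult_mat_dim commute)
  also have "?D * ?T - 2 \<cdot>\<^sub>m (?X * ?CM * ?T + ?G * ?T + ?W * ?T) = (?D - 2 \<cdot>\<^sub>m (?X * ?CM + ?G + ?W)) * ?T"
  proof -
    have XCM: "?X * ?CM \<in> carrier_mat l (tri k)"
      using M by (intro mult_carrier_mat[OF Int_mat_carrier]) simp
    note C = XCM Int_mat_carrier[of k t l x y] Int_mat_carrier[of k t l x w]
    show ?thesis
      unfolding minus_mult_distrib_mat[OF delta_mat_carrier smult_carrier_mat[OF add_carrier_mat[OF C(3)]] T]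
        mult_smult_assoc_mat[OF add_carrier_mat[OF C(3)] T] add_mult_distrib_mat[OF add_carrier_mat[OF C(2)] C(3) T]
        add_mult_distrib_mat[OF C(1) C(2) T] ..
  qed
  finally show ?thesis unfolding reg_A_def .
qed

lemma reg_b_modulation:
  fixes x :: "real \<Rightarrow> real vec"
  assumes S: "S \<in> carrier_mat k k" and Si: "Si \<in> carrier_mat k k" and inv: "Si * S = 1\<^sub>m k"
    and Q: "Q \<in> carrier_mat k k" and dx: "\<And>\<tau>. dim_vec (x \<tau>) = k"
    and x: "sq_integrable_on k x (t 0) (t l)" and mono: "\<forall>r<l. t r \<le> t (Suc r)"
  shows "reg_b k t l (\<lambda>\<tau>. S *\<^sub>v x \<tau>) (transpose_mat Si * Q * Si) = reg_b k t l x Q"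
proof -
  have "Int_mat k t l (\<lambda>\<tau>. S *\<^sub>v x \<tau>) (\<lambda>\<tau>. S *\<^sub>v x \<tau>) *\<^sub>v svec (transpose_mat Si * Q * Si)
      = Int_mat k t l x x *\<^sub>v (transpose_mat (skron S S) *\<^sub>v svec (transpose_mat Si * Q * Si))"
    using S Si Q by (simp add: Int_mat_mult_mat_vec[OF S dx dx x x mono] assoc_mult_mat_vec_dim)
  also have "\<dots> = Int_mat k t l x x *\<^sub>v svec Q"
    unfolding transpose_skron_mult_svec_congruence[OF S Si Q inv] ..
  finally show ?thesis unfolding reg_b_def by simp
qed

lemma regression_modulation:
  fixes x y w y' w' :: "real \<Rightarrow> real vec"
  assumes S: "S \<in> carrier_mat k k" and Si: "Si \<in> carrier_mat k k" and inv: "Si * S = 1\<^sub>m k"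
    and M: "M \<in> carrier_mat k k" and B: "B \<in> carrier_mat k k" and BS: "B * S = S * M"
    and Q: "Q \<in> carrier_mat k k"
    and dx: "\<And>\<tau>. dim_vec (x \<tau>) = k" and dy: "\<And>\<tau>. dim_vec (y \<tau>) = k" and dw: "\<And>\<tau>. dim_vec (w \<tau>) = k"
    and x: "sq_integrable_on k x (t 0) (t l)" and y: "sq_integrable_on k y (t 0) (t l)"
    and w: "sq_integrable_on k w (t 0) (t l)" and mono: "\<forall>r<l. t r \<le> t (Suc r)"
    and y': "\<And>\<tau>. \<tau> \<in> {t 0..t l} \<Longrightarrow> y' \<tau> = S *\<^sub>v y \<tau>"
    and w': "\<And>\<tau>. \<tau> \<in> {t 0..t l} \<Longrightarrow> w' \<tau> = S *\<^sub>v w \<tau>"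
  shows "reg_A k t l (\<lambda>\<tau>. S *\<^sub>v x \<tau>) y' w' B = reg_A k t l x y w M * transpose_mat (skron S S)"
    and "reg_b k t l (\<lambda>\<tau>. S *\<^sub>v x \<tau>) (transpose_mat Si * Q * Si) = reg_b k t l x Q"
    and "P \<in> carrier_mat k k \<Longrightarrow>
      reg_A k t l x y w M *\<^sub>v svec P = reg_b k t l x Q \<longleftrightarrow>
      reg_A k t l (\<lambda>\<tau>. S *\<^sub>v x \<tau>) y' w' B *\<^sub>v svec (transpose_mat Si * P * Si)
        = reg_b k t l (\<lambda>\<tau>. S *\<^sub>v x \<tau>) (transpose_mat Si * Q * Si)"
proof -
  have "reg_A k t l (\<lambda>\<tau>. S *\<^sub>v x \<tau>) y' w' B
      = reg_A k t l (\<lambda>\<tau>. S *\<^sub>v x \<tau>) (\<lambda>\<tau>. S *\<^sub>v y \<tau>) (\<lambda>\<tau>. S *\<^sub>v w \<tau>) B"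
    using Int_mat_cong[OF mono y', where k = k and x = "\<lambda>\<tau>. S *\<^sub>v x \<tau>"]
      Int_mat_cong[OF mono w', where k = k and x = "\<lambda>\<tau>. S *\<^sub>v x \<tau>"]
    by (simp add: reg_A_def)
  also have "\<dots> = reg_A k t l x y w M * transpose_mat (skron S S)"
    by (rule reg_A_modulation[OF S M B BS dx dy dw x y w mono])
  finally show A: "reg_A k t l (\<lambda>\<tau>. S *\<^sub>v x \<tau>) y' w' B = reg_A k t l x y w M * transpose_mat (skron S S)" .
  show b: "reg_b k t l (\<lambda>\<tau>. S *\<^sub>v x \<tau>) (transpose_mat Si * Q * Si) = reg_b k t l x Q"
    by (rule reg_b_modulation[OF S Si inv Q dx x mono])
  assume P: "P \<in> carrier_mat k k"
  have "reg_A k t l (\<lambda>\<tau>. S *\<^sub>v x \<tau>) y' w' B *\<^sub>v svec (transpose_mat Si * P * Si)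
      = reg_A k t l x y w M *\<^sub>v (transpose_mat (skron S S) *\<^sub>v svec (transpose_mat Si * P * Si))"
    unfolding A using S Si P by (simp add: assoc_mult_mat_vec_dim reg_A_def delta_mat_def)
  also have "\<dots> = reg_A k t l x y w M *\<^sub>v svec P"
    unfolding transpose_skron_mult_svec_congruence[OF S Si P inv] ..
  finally show "reg_A k t l x y w M *\<^sub>v svec P = reg_b k t l x Q \<longleftrightarrow>
      reg_A k t l (\<lambda>\<tau>. S *\<^sub>v x \<tau>) y' w' B *\<^sub>v svec (transpose_mat Si * P * Si)
        = reg_b k t l (\<lambda>\<tau>. S *\<^sub>v x \<tau>) (transpose_mat Si * Q * Si)"
    unfolding b by simp
qed

section \<open>Block diagonal matrices\<close>

lemma offs_Suc: "offs ds (Suc j) = offs ds j + ds j"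
  by (simp add: offs_def)

lemma offs_mono: "i \<le> j \<Longrightarrow> offs ds i \<le> offs ds j"
  unfolding offs_def by (rule sum_mono2) auto

lemma ex_block: "a < offs ds N \<Longrightarrow> \<exists>j<N. offs ds j \<le> a \<and> a < offs ds (Suc j)"
proof (induction N)
  case (Suc N)
  show ?case
  proof (cases "a < offs ds N")
    case True
    then show ?thesis using Suc.IH by (meson less_SucI)
  next
    case False
    then show ?thesis using Suc.prems by auto
  qed
qed (simp add: offs_def)

lemma block_unique:
  assumes "offs ds i \<le> a" "a < offs ds (Suc i)" "offs ds j \<le> a" "a < offs ds (Suc j)"
  shows "i = j"
proof (rule ccontr)
  assume "i \<noteq> j"
  then consider "Suc i \<le> j" | "Suc j \<le> i" by linarith
  then show False
  proof cases
    case 1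
    then have "offs ds (Suc i) \<le> offs ds j" by (rule offs_mono)
    then show False using assms by linarith
  next
    case 2
    then have "offs ds (Suc j) \<le> offs ds i" by (rule offs_mono)
    then show False using assms by linarith
  qed
qed

definition block_index :: "(nat \<Rightarrow> nat) \<Rightarrow> nat \<Rightarrow> nat \<Rightarrow> nat" where
  "block_index ds N a = (THE j. j < N \<and> offs ds j \<le> a \<and> a < offs ds (Suc j))"

lemma block_index_eq:
  assumes "j < N" "offs ds j \<le> a" "a < offs ds (Suc j)"
  shows "block_index ds N a = j"
  unfolding block_index_def by (rule the_equality) (use assms block_unique in blast)+

lemma block_index:
  assumes "a < offs ds N"
  shows "block_index ds N a < N" "offs ds (block_index ds N a) \<le> a" "a < offs ds (Suc (block_index ds N a))"
proof -
  obtain j where j: "j < N" "offs ds j \<le> a" "a < offs ds (Suc j)" using ex_block[OF assms] by blast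
  then have "block_index ds N a = j" by (rule block_index_eq)
  then show "block_index ds N a < N" "offs ds (block_index ds N a) \<le> a" "a < offs ds (Suc (block_index ds N a))"
    using j by simp_all
qed

lemma index_block_diag:
  assumes a: "a < offs ds N" and b: "b < offs ds N"
  shows "block_diag N ds Ss $$ (a, b) = (if block_index ds N a = block_index ds N b
    then Ss (block_index ds N a) $$ (a - offs ds (block_index ds N a), b - offs ds (block_index ds N a)) else 0)"
proof -
  have "(\<exists>j<N. offs ds j \<le> a \<and> a < offs ds (Suc j) \<and> offs ds j \<le> b \<and> b < offs ds (Suc j))
      \<longleftrightarrow> block_index ds N a = block_index ds N b"
    using block_index[OF a] block_index[OF b] block_index_eq by metis
  then show ?thesis
    using a b unfolding block_diag_def Let_def block_index_def[symmetric] by simp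
qed

lemma dim_block_diag [simp]:
  "dim_row (block_diag N ds Ss) = offs ds N" "dim_col (block_diag N ds Ss) = offs ds N"
  by (simp_all add: block_diag_def Let_def)

lemma block_diag_carrier: "block_diag N ds Ss \<in> carrier_mat (offs ds N) (offs ds N)"
  by (rule carrier_matI) simp_all

lemma block_diag_cong:
  assumes "\<And>i. i < N \<Longrightarrow> As i = Bs i"
  shows "block_diag N ds As = block_diag N ds Bs"
  using assms block_index by (intro eq_matI) (auto simp: index_block_diag)

lemma sum_block:
  assumes j: "j < N"
  shows "(\<Sum>b<offs ds N. if block_index ds N b = j then F (b - offs ds j) else 0) = (\<Sum>b<ds j. F b)"
proof -
  let ?o = "offs ds j"
  have sub: "{?o..<?o + ds j} \<subseteq> {..<offs ds N}"
    using offs_mono[of "Suc j" N ds] j by (auto simp: offs_Suc)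
  have block: "block_index ds N b = j \<longleftrightarrow> ?o \<le> b \<and> b < ?o + ds j" if "b < offs ds N" for b
    using block_index[OF that] block_index_eq[OF j] by (auto simp: offs_Suc)
  have set: "{..<offs ds N} \<inter> {b. ?o \<le> b \<and> b < ?o + ds j} = {?o..<?o + ds j}"
    using sub by auto
  have "(\<Sum>b<offs ds N. if block_index ds N b = j then F (b - ?o) else 0)
      = (\<Sum>b\<in>{..<offs ds N} \<inter> {b. ?o \<le> b \<and> b < ?o + ds j}. F (b - ?o))"
    by (simp add: block sum.If_cases)
  also have "\<dots> = (\<Sum>b\<in>{?o..<?o + ds j}. F (b - ?o))"
    unfolding set ..
  also have "\<dots> = (\<Sum>b<ds j. F b)"
    using sum.shift_bounds_nat_ivl[of "\<lambda>b. F (b - ?o)" 0 ?o "ds j"] by (simp add: atLeast0LessThan add.commute)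
  finally show ?thesis .
qed

lemma block_diag_mult:
  assumes A: "\<And>i. i < N \<Longrightarrow> As i \<in> carrier_mat (ds i) (ds i)"
    and B: "\<And>i. i < N \<Longrightarrow> (Bs i :: real mat) \<in> carrier_mat (ds i) (ds i)"
  shows "block_diag N ds As * block_diag N ds Bs = block_diag N ds (\<lambda>i. As i * Bs i)"
proof (rule eq_matI)
  fix a c assume "a < dim_row (block_diag N ds (\<lambda>i. As i * Bs i))" "c < dim_col (block_diag N ds (\<lambda>i. As i * Bs i))"
  then have a: "a < offs ds N" and c: "c < offs ds N" by auto
  let ?j = "block_index ds N a" and ?o = "offs ds (block_index ds N a)"
  note ja = block_index[OF a] and jc = block_index[OF c]
  have "(block_diag N ds As * block_diag N ds Bs) $$ (a, c)
      = (\<Sum>b<offs ds N. block_diag N ds As $$ (a, b) * block_diag N ds Bs $$ (b, c))"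
    by (rule index_mult_mat_sum[OF block_diag_carrier block_diag_carrier a c])
  also have "\<dots> = (\<Sum>b<offs ds N. if block_index ds N b = ?j then
      (if ?j = block_index ds N c then As ?j $$ (a - ?o, b - ?o) * Bs ?j $$ (b - ?o, c - ?o) else 0) else 0)"
    using a c by (intro sum.cong) (auto simp: index_block_diag)
  also have "\<dots> = (\<Sum>b<ds ?j. if ?j = block_index ds N c then As ?j $$ (a - ?o, b) * Bs ?j $$ (b, c - ?o) else 0)"
    by (rule sum_block[OF ja(1)])
  also have "\<dots> = block_diag N ds (\<lambda>i. As i * Bs i) $$ (a, c)"
  proof (cases "?j = block_index ds N c")
    case True
    then have "a - ?o < ds ?j" "c - ?o < ds ?j" using ja jc by (auto simp: offs_Suc)
    then have "(\<Sum>b<ds ?j. As ?j $$ (a - ?o, b) * Bs ?j $$ (b, c - ?o)) = (As ?j * Bs ?j) $$ (a - ?o, c - ?o)"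
      by (intro index_mult_mat_sum[symmetric, OF A[OF ja(1)] B[OF ja(1)]])
    then show ?thesis using True a c by (simp add: index_block_diag)
  qed (use a c in \<open>simp add: index_block_diag\<close>)
  finally show "(block_diag N ds As * block_diag N ds Bs) $$ (a, c) = block_diag N ds (\<lambda>i. As i * Bs i) $$ (a, c)" .
qed simp_all

lemma block_diag_one: "block_diag N ds (\<lambda>i. 1\<^sub>m (ds i)) = 1\<^sub>m (offs ds N)"
proof (rule eq_matI)
  fix a c assume "a < dim_row (1\<^sub>m (offs ds N))" "c < dim_col (1\<^sub>m (offs ds N))"
  then have a: "a < offs ds N" and c: "c < offs ds N" by auto
  show "block_diag N ds (\<lambda>i. 1\<^sub>m (ds i)) $$ (a, c) = 1\<^sub>m (offs ds N) $$ (a, c)"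
    using a c block_index[OF a] block_index[OF c] by (auto simp: index_block_diag offs_Suc)
qed simp_all

lemma invertible_block_diag:
  assumes S: "\<And>i. i < N \<Longrightarrow> Ss i \<in> carrier_mat (ds i) (ds i) \<and> invertible_mat (Ss i :: real mat)"
  shows "invertible_mat (block_diag N ds Ss)"
proof -
  let ?S = "block_diag N ds Ss" and ?Si = "block_diag N ds (\<lambda>i. minv (Ss i))"
  have "?Si * ?S = block_diag N ds (\<lambda>i. minv (Ss i) * Ss i)"
    using S minv_inverse by (intro block_diag_mult) auto
  also have "\<dots> = block_diag N ds (\<lambda>i. 1\<^sub>m (ds i))"
    using S minv_inverse(3) by (intro block_diag_cong) blast
  also have "\<dots> = 1\<^sub>m (offs ds N)" by (rule block_diag_one)
  finally have left: "?Si * ?S = 1\<^sub>m (offs ds N)" .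
  then have "?S * ?Si = 1\<^sub>m (offs ds N)"
    by (rule mat_mult_left_right_inverse[OF block_diag_carrier block_diag_carrier])
  with left show ?thesis
    unfolding invertible_mat_def inverts_mat_def by auto
qed

lemma minv_block_diag_mult_mat_vec:
  assumes "\<And>i. i < N \<Longrightarrow> Ss i \<in> carrier_mat (ds i) (ds i) \<and> invertible_mat (Ss i :: real mat)"
    and "dim_vec v = offs ds N"
  shows "minv (block_diag N ds Ss) *\<^sub>v (block_diag N ds Ss *\<^sub>v v) = v"
  using assms block_diag_carrier minv_inverse[OF block_diag_carrier invertible_block_diag]
  by (intro left_inverse_mult_mat_vec) auto

lemma sq_integrable_on_blk_vec:
  assumes x: "sq_integrable_on (offs ds N) x a b" and j: "j < N"
  shows "sq_integrable_on (ds j) (\<lambda>\<tau>. blk_vec ds j (x \<tau>)) a b"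
proof -
  have "offs ds j + i < offs ds N" if "i < ds j" for i
    using that offs_mono[of "Suc j" N ds] j by (simp add: offs_Suc)
  then show ?thesis using x unfolding sq_integrable_on_def blk_vec_def by simp
qed

theorem theorem4:
  fixes N l :: nat and ns ms :: "nat \<Rightarrow> nat" and j :: nat
    and f :: "real vec \<Rightarrow> real vec" and g :: "real vec \<Rightarrow> real mat"
    and Amat Bmat K Q R :: "real mat" and Ss :: "nat \<Rightarrow> real mat"
    and t :: "nat \<Rightarrow> real" and x u :: "real \<Rightarrow> real vec"
  defines "n \<equiv> offs ns N" and "m \<equiv> offs ms N"
  defines "Ajj \<equiv> blk_diag_entry ns ns j Amat" and "Bjj \<equiv> blk_diag_entry ns ms j Bmat"
  defines "xj \<equiv> (\<lambda>\<tau>. blk_vec ns j (x \<tau>))"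
  defines "gu \<equiv> (\<lambda>\<tau>. blk_rows ns j (g (x \<tau>)) *\<^sub>v u \<tau>)"
  defines "wj \<equiv> (\<lambda>\<tau>. blk_vec ns j (f (x \<tau>)) - Ajj *\<^sub>v xj \<tau>)"
  defines "Qij \<equiv> Q + transpose_mat K * R * K"
  defines "Areg \<equiv> reg_A (ns j) t l xj gu wj (Bjj * K)"
  defines "bvec \<equiv> reg_b (ns j) t l xj Qij"
  defines "S \<equiv> block_diag N ns Ss" and "Sj \<equiv> Ss j"
  defines "Sji \<equiv> minv (Ss j)"
  defines "xtj \<equiv> (\<lambda>\<tau>. Sj *\<^sub>v xj \<tau>)"
  defines "gtu \<equiv> (\<lambda>\<tau>. Sj *\<^sub>v (blk_rows ns j (g (minv S *\<^sub>v (S *\<^sub>v x \<tau>))) *\<^sub>v u \<tau>))"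
  defines "wtj \<equiv> (\<lambda>\<tau>. Sj *\<^sub>v blk_vec ns j (f (minv S *\<^sub>v (S *\<^sub>v x \<tau>))) - (Sj * Ajj * Sji) *\<^sub>v xtj \<tau>)"
  defines "Ktij \<equiv> K * Sji"
  defines "Qtij \<equiv> transpose_mat Sji * Q * Sji + transpose_mat Ktij * R * Ktij"
  defines "Atil \<equiv> reg_A (ns j) t l xtj gtu wtj ((Sj * Bjj) * Ktij)"
  defines "btil \<equiv> reg_b (ns j) t l xtj Qtij"
  assumes j: "j < N"
    and fg_dims: "\<forall>y. dim_vec y = n \<longrightarrow> dim_vec (f y) = n \<and> g y \<in> carrier_mat n m"
    and f0: "f (0\<^sub>v n) = 0\<^sub>v n"
    and lipschitz: "\<exists>r>0. \<exists>L. \<forall>y z. dim_vec y = n \<longrightarrow> dim_vec z = n \<longrightarrow> vnorm y \<le> r \<longrightarrow> vnorm z \<le> r \<longrightarrow>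
          vnorm (f y - f z) \<le> L * vnorm (y - z) \<and> vnorm (vecm (g y - g z)) \<le> L * vnorm (y - z)"
    and A_dim: "Amat \<in> carrier_mat n n"
    and A_lin: "\<forall>\<epsilon>>0. \<exists>\<delta>>0. \<forall>h. dim_vec h = n \<longrightarrow> vnorm h < \<delta> \<longrightarrow>
          vnorm (f h - Amat *\<^sub>v h) \<le> \<epsilon> * vnorm h"
    and B_lin: "Bmat = g (0\<^sub>v n)"
    and Q: "psd_mat (ns j) Q" and R: "pd_mat (ms j) R"
    and K: "K \<in> carrier_mat (ms j) (ns j)" and hurw: "hurwitz (Ajj - Bjj * K)"
    and t_mono: "\<forall>r<l. t r < t (Suc r)"
    and xu_dims: "\<forall>\<tau>\<in>{t 0..t l}. dim_vec (x \<tau>) = n \<and> dim_vec (u \<tau>) = m"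
    and traj: "\<forall>\<tau>\<in>{t 0..t l}. \<forall>i<n.
          ((\<lambda>s. x s $ i) has_real_derivative (f (x \<tau>) + g (x \<tau>) *\<^sub>v u \<tau>) $ i) (at \<tau> within {t 0..t l})"
    and x_sq: "sq_integrable_on n x (t 0) (t l)" and u_sq: "sq_integrable_on m u (t 0) (t l)"
    and gu_sq: "sq_integrable_on (ns j) gu (t 0) (t l)" and wj_sq: "sq_integrable_on (ns j) wj (t 0) (t l)"
    and S_inv: "\<forall>i<N. Ss i \<in> carrier_mat (ns i) (ns i) \<and> invertible_mat (Ss i)"
  shows "(\<forall>P. pd_mat (ns j) P \<longrightarrow>
            (Areg *\<^sub>v svec P = bvec \<longleftrightarrow> Atil *\<^sub>v svec (transpose_mat Sji * P * Sji) = btil))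
         \<and> Atil = Areg * transpose_mat (skron Sj Sj)
         \<and> btil = bvec"
proof -
  let ?k = "ns j"
  have Sj: "Sj \<in> carrier_mat ?k ?k" "invertible_mat Sj" using S_inv j by (auto simp: Sj_def)
  then have Sji: "Sji \<in> carrier_mat ?k ?k" "Sji * Sj = 1\<^sub>m ?k"
    unfolding Sji_def Sj_def by (auto dest: minv_inverse)
  have Ajj: "Ajj \<in> carrier_mat ?k ?k" and Bjj: "Bjj \<in> carrier_mat ?k (ms j)"
    unfolding Ajj_def Bjj_def blk_diag_entry_def by auto
  have dims: "dim_vec (xj \<tau>) = ?k" "dim_vec (gu \<tau>) = ?k" "dim_vec (wj \<tau>) = ?k" for \<tau>
    using Ajj by (simp_all add: xj_def gu_def wj_def blk_vec_def blk_rows_def)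
  have "minv S *\<^sub>v (S *\<^sub>v x \<tau>) = x \<tau>" if "\<tau> \<in> {t 0..t l}" for \<tau>
    using S_inv xu_dims that unfolding S_def n_def by (intro minv_block_diag_mult_mat_vec) auto
  then have modulated_data: "gtu \<tau> = Sj *\<^sub>v gu \<tau>" "wtj \<tau> = Sj *\<^sub>v wj \<tau>" if "\<tau> \<in> {t 0..t l}" for \<tau>
    using that minus_similar_mult_mat_vec[OF Sj(1) Sji(1) Ajj Sji(2) _ dims(1)]
    by (simp_all add: gtu_def gu_def wtj_def wj_def xtj_def blk_vec_def)
  have feedback: "Sj * Bjj * Ktij * Sj = Sj * (Bjj * K)"
    using Sj Sji Bjj K by (simp add: Ktij_def assoc_mult_mat_dim)
  have Qtij: "Qtij = transpose_mat Sji * Qij * Sji"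
    using congruence_add_feedback_cost[OF Sji(1) _ K, of Q R] Q R
    by (simp add: Qtij_def Qij_def Ktij_def psd_mat_def pd_mat_def sym_mat_def)
  have Qij: "Qij \<in> carrier_mat ?k ?k"
    using K by (intro carrier_matI) (simp_all add: Qij_def)
  have xj_sq: "sq_integrable_on ?k xj (t 0) (t l)"
    unfolding xj_def using sq_integrable_on_blk_vec[OF x_sq[unfolded n_def] j] .
  have mono: "\<forall>r<l. t r \<le> t (Suc r)" using t_mono by (simp add: less_imp_le)
  have "Bjj * K \<in> carrier_mat ?k ?k" "Sj * Bjj * Ktij \<in> carrier_mat ?k ?k"
    using Bjj K Sj Sji by (auto simp: Ktij_def intro!: carrier_matI)
  note modulation = regression_modulation[OF Sj(1) Sji this feedback Qij dims(1) dims(2) dims(3)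
      xj_sq gu_sq wj_sq mono modulated_data]
  show ?thesis
    using modulation unfolding Areg_def Atil_def bvec_def btil_def xtj_def Qtij pd_mat_def sym_mat_def
    by simp
qed

end
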